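(* Let $d\ge2$, $k\ge1$, $U=U_1\times\cdots\times U_d$ with pairwise disjoint $U_i$, and $T\subseteq U$. Let $\mathbb F$ be a field of characteristic $2$ with $|\mathbb F|\ge N$. Let $f:\bigcup_{i=2}^dU_i\to\mathbb F$ be injective, and let $\chi(b)=(1,f(b),\dots,f(b)^{(d-1)k-1})\in\mathbb F^{(d-1)k}$. For $t\in T$ let $M_t=\chi(t[2])\wedge\cdots\wedge\chi(t[d])\in\Lambda(\mathbb F^{(d-1)k})$. Let $y_t$ ($t\in T$) and $z$ be indeterminates. For $a\in U_1$ let $Q_a=\sum_{t\in T:t[1]=a}M_ty_t$, and set $$P(z)=\prod_{a\in U_1}(1+zQ_a).$$ Then $P$ has $z$-degree at most $k$. Moreover, the coefficient of $z^ke_{[(d-1)k]}$ in $P(z)$ is a nonzero polynomial in the variables $\{y_t\}$ if and only if $T$ contains $k$ pairwise disjoint tuples.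
   Context: $\Lambda(\mathbb F^{r})$ is the exterior algebra over $\mathbb F^r$ with basis $\{e_I:I\subseteq[r]\}$ and $e_{[r]}=e_1\wedge\cdots\wedge e_r$. Vectors are identified with degree-one elements. Since $\mathbb F$ has characteristic $2$, this algebra is commutative. Coefficients are taken in the polynomial ring $\mathbb F[\{y_t\}]$. Tuples $a,b\in U$ are disjoint if $a[i]\ne b[i]$ for all $i=1,\dots,d$. *)

theory Defs
  imports "HOL-Library.Poly_Mapping"
begin

text \<open>In this development the variables are of type 'u list option:
  Some t is the indeterminate y_t and None is the indeterminate z.\<close>

type_synonym ('v, 'a) mpoly = "('v \<Rightarrow>\<^sub>0 nat) \<Rightarrow>\<^sub>0 'a"

definition mp_var :: "'v \<Rightarrow> ('v, 'a::comm_ring_1) mpoly" where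
  "mp_var v = Poly_Mapping.single (Poly_Mapping.single v 1) 1"

definition mp_const :: "'a::comm_ring_1 \<Rightarrow> ('v, 'a) mpoly" where
  "mp_const c = Poly_Mapping.single 0 c"

text \<open>Exterior algebra Lambda(F^r) with coefficients in a commutative ring R of
  characteristic 2: an element is a function from index sets I \<subseteq> {0..<r}
  (basis vector e_I) to R. Since the characteristic is 2 no signs appear:
  e_I \<and> e_J = e_(I \<union> J) if I, J are disjoint and 0 otherwise.\<close>

type_synonym 'r ext = "nat set \<Rightarrow> 'r"

definition ext_one :: "'r::comm_ring_1 ext" where
  "ext_one = (\<lambda>K. if K = {} then 1 else 0)"

definition ext_add :: "'r::comm_ring_1 ext \<Rightarrow> 'r ext \<Rightarrow> 'r ext" where
  "ext_add x y = (\<lambda>K. x K + y K)"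

definition ext_mult :: "nat \<Rightarrow> 'r::comm_ring_1 ext \<Rightarrow> 'r ext \<Rightarrow> 'r ext" where
  "ext_mult r x y = (\<lambda>K. if K \<subseteq> {0..<r} then (\<Sum>I\<in>Pow K. x I * y (K - I)) else 0)"

text \<open>The vector chi(b) = (1, f b, ..., f b ^ (r-1)) as a degree-one element
  (basis vectors e_{i} for i < r, 0-based).\<close>

definition chi :: "nat \<Rightarrow> ('u \<Rightarrow> 'a::field) \<Rightarrow> 'u \<Rightarrow> ('v, 'a) mpoly ext" where
  "chi r f b = (\<lambda>K. if \<exists>i<r. K = {i} then mp_const (f b ^ (THE i. K = {i})) else 0)"

text \<open>Tuples t \<in> U_1 \<times> ... \<times> U_d are lists of length d; component t[i+1] is t ! i.
  M_t = chi(t[2]) \<and> ... \<and> chi(t[d]).\<close>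

definition M_elem :: "nat \<Rightarrow> nat \<Rightarrow> ('u \<Rightarrow> 'a::field) \<Rightarrow> 'u list \<Rightarrow> ('v, 'a) mpoly ext" where
  "M_elem d r f t = foldr (\<lambda>i acc. ext_mult r (chi r f (t ! i)) acc) [1..<d] ext_one"

definition Q_elem :: "nat \<Rightarrow> nat \<Rightarrow> ('u \<Rightarrow> 'a::field) \<Rightarrow> 'u list set \<Rightarrow> 'u
    \<Rightarrow> ('u list option, 'a) mpoly ext" where
  "Q_elem d r f T a = (\<lambda>K. \<Sum>t\<in>{t\<in>T. t ! 0 = a}. M_elem d r f t K * mp_var (Some t))"

text \<open>P(z) = prod over a \<in> U_1 of (1 + z Q_a).  The product in the (commutative,
  since char 2) exterior algebra is taken via Finite_Set.fold.\<close>

definition P_elem :: "nat \<Rightarrow> nat \<Rightarrow> ('u \<Rightarrow> 'a::field) \<Rightarrow> 'u list set \<Rightarrow> 'u set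
    \<Rightarrow> ('u list option, 'a) mpoly ext" where
  "P_elem d r f T U1 = Finite_Set.fold
     (\<lambda>a acc. ext_mult r (ext_add ext_one (\<lambda>K. mp_var None * Q_elem d r f T a K)) acc)
     ext_one U1"

definition z_degree_le :: "('u list option, 'a::comm_ring_1) mpoly ext \<Rightarrow> nat \<Rightarrow> bool" where
  "z_degree_le x k \<longleftrightarrow> (\<forall>K. \<forall>m\<in>Poly_Mapping.keys (x K). Poly_Mapping.lookup m None \<le> k)"

text \<open>The coefficient of z^k in a polynomial p, as a polynomial in the remaining
  variables, is nonzero iff some z-free monomial m has m * z^k in the support of p.\<close>

definition zcoeff_nonzero :: "('u list option, 'a::comm_ring_1) mpoly \<Rightarrow> nat \<Rightarrow> bool" where
  "zcoeff_nonzero p k \<longleftrightarrow>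
     (\<exists>m. Poly_Mapping.lookup m None = 0 \<and> Poly_Mapping.lookup p (m + Poly_Mapping.single None k) \<noteq> 0)"

end

theory Submission
  imports Defs "HOL-Computational_Algebra.Polynomial"
begin

text \<open>Expanding the product, \<open>P(z)\<close> is the sum, over the sets \<open>S \<subseteq> T\<close> of tuples with
  distinct first coordinates, of \<open>z^|S| \<Prod>t\<in>S. y_t\<close> times the wedge product of the \<open>M_t\<close>,
  \<open>t \<in> S\<close>; distinct \<open>S\<close> give distinct monomials, so nothing cancels. That wedge product is
  homogeneous of degree \<open>(d - 1) |S|\<close> in \<open>\<Lambda>(F^((d-1)k))\<close>, hence vanishes unless \<open>|S| \<le> k\<close>.
  For \<open>|S| = k\<close> its top coefficient is the Vandermonde determinant of the values \<open>f (t[i])\<close>,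
  \<open>t \<in> S\<close>, \<open>i \<ge> 2\<close>, which is nonzero iff these
  values are distinct, i.e. iff the tuples of \<open>S\<close> are pairwise disjoint.\<close>

section \<open>The exterior algebra in characteristic 2\<close>

lemma ext_mult_commute: "ext_mult r x y = ext_mult r y x"
proof -
  have "(\<Sum>I\<in>Pow K. x I * y (K - I)) = (\<Sum>I\<in>Pow K. y I * x (K - I))" for K
    by (rule sum.reindex_bij_witness[of _ "\<lambda>I. K - I" "\<lambda>I. K - I"])
       (auto simp: mult.commute double_diff)
  then show ?thesis
    by (simp add: ext_mult_def fun_eq_iff)
qed

lemma ext_mult_assoc: "ext_mult r (ext_mult r x y) w = ext_mult r x (ext_mult r y w)"
proof (rule ext)
  fix K
  show "ext_mult r (ext_mult r x y) w K = ext_mult r x (ext_mult r y w) K"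
  proof (cases "K \<subseteq> {0..<r}")
    case False
    then show ?thesis by (simp add: ext_mult_def)
  next
    case True
    then have fin: "finite K" using finite_subset by blast
    have diff_diff: "K - J - (I - J) = K - I" if "J \<subseteq> I" "I \<subseteq> K" for I J :: "nat set"
      using that by blast
    have "ext_mult r (ext_mult r x y) w K = (\<Sum>I\<in>Pow K. (\<Sum>J\<in>Pow I. x J * y (I - J)) * w (K - I))"
      using True by (auto simp: ext_mult_def intro!: sum.cong)
    also have "\<dots> = (\<Sum>(I,J)\<in>(SIGMA I:Pow K. Pow I). x J * y (I - J) * w (K - I))"
      using fin by (simp add: sum_distrib_right sum.Sigma finite_subset)
    also have "\<dots> = (\<Sum>(J,L)\<in>(SIGMA J:Pow K. Pow (K - J)). x J * (y L * w (K - J - L)))"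
      by (rule sum.reindex_bij_witness[of _ "\<lambda>(J,L). (J \<union> L, J)" "\<lambda>(I,J). (J, I - J)"])
         (auto simp: mult.assoc Un_Diff diff_diff)
    also have "\<dots> = (\<Sum>J\<in>Pow K. x J * (\<Sum>L\<in>Pow (K - J). y L * w (K - J - L)))"
      using fin by (simp add: sum_distrib_left sum.Sigma finite_subset)
    also have "\<dots> = ext_mult r x (ext_mult r y w) K"
      using True by (auto simp: ext_mult_def intro!: sum.cong)
    finally show ?thesis .
  qed
qed

lemma comp_fun_commute_ext_mult: "comp_fun_commute (\<lambda>a. ext_mult r (g a))"
proof
  fix a b
  have "ext_mult r (g a) (ext_mult r (g b) z) = ext_mult r (g b) (ext_mult r (g a) z)" for z
    by (simp only: ext_mult_assoc[symmetric] ext_mult_commute[of r "g a" "g b"])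
  then show "ext_mult r (g a) \<circ> ext_mult r (g b) = ext_mult r (g b) \<circ> ext_mult r (g a)"
    by (simp add: fun_eq_iff)
qed

lemma fold_ext_mult_insert:
  "finite S \<Longrightarrow> a \<notin> S \<Longrightarrow>
    Finite_Set.fold (\<lambda>a. ext_mult r (g a)) z (insert a S)
      = ext_mult r (g a) (Finite_Set.fold (\<lambda>a. ext_mult r (g a)) z S)"
  by (rule comp_fun_commute_on.fold_insert[OF comp_fun_commute_ext_mult[unfolded comp_fun_commute_def']]) auto

definition ext_supported :: "nat \<Rightarrow> 'r::comm_ring_1 ext \<Rightarrow> bool" where
  "ext_supported r x \<longleftrightarrow> (\<forall>K. x K \<noteq> 0 \<longrightarrow> K \<subseteq> {0..<r})"

lemma ext_supported_one: "ext_supported r ext_one"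
  by (auto simp: ext_supported_def ext_one_def)

lemma ext_supported_mult: "ext_supported r (ext_mult r x y)"
  by (simp add: ext_supported_def ext_mult_def)

lemma ext_mult_one_left:
  assumes "ext_supported r y"
  shows "ext_mult r ext_one y = y"
proof (rule ext)
  fix K
  show "ext_mult r ext_one y K = y K"
  proof (cases "K \<subseteq> {0..<r}")
    case False
    then show ?thesis using assms by (auto simp: ext_mult_def ext_supported_def)
  next
    case True
    then have "finite K" using finite_subset by blast
    then have "(\<Sum>I\<in>Pow K. ext_one I * y (K - I)) = (\<Sum>I\<in>{{}}. ext_one I * y (K - I))"
      by (intro sum.mono_neutral_right) (auto simp: ext_one_def)
    then show ?thesis using True by (simp add: ext_mult_def ext_one_def)
  qed
qed

lemma ext_mult_zero_left: "ext_mult r (\<lambda>_. 0) y = (\<lambda>_. 0)"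
  by (simp add: ext_mult_def fun_eq_iff)

lemma ext_mult_add_left: "ext_mult r (ext_add x y) z = ext_add (ext_mult r x z) (ext_mult r y z)"
  by (simp add: fun_eq_iff ext_mult_def ext_add_def distrib_right sum.distrib)

text \<open>For \<open>e \<in> K\<close>, complementation \<open>I \<mapsto> K - I\<close> matches the terms of \<open>(x \<and> x) K\<close> with
  \<open>e \<in> I\<close> to those with \<open>e \<notin> I\<close>, so the coefficient is twice a sum.\<close>

lemma ext_mult_self_eq_zero:
  fixes x :: "'r::comm_ring_1 ext"
  assumes char2: "(1::'r) + 1 = 0" and "x {} = 0"
  shows "ext_mult r x x = (\<lambda>_. 0)"
proof (rule ext)
  fix K
  show "ext_mult r x x K = 0"
  proof (cases "K \<subseteq> {0..<r} \<and> K \<noteq> {}")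
    case False
    then show ?thesis using \<open>x {} = 0\<close> by (auto simp: ext_mult_def)
  next
    case True
    then have fin: "finite K" using finite_subset by blast
    from True obtain e where e: "e \<in> K" by blast
    define g where "g I = x I * x (K - I)" for I
    define A where "A = {I\<in>Pow K. e \<in> I}"
    define B where "B = {I\<in>Pow K. e \<notin> I}"
    have "Pow K = A \<union> B" "A \<inter> B = {}" "finite A" "finite B"
      using fin by (auto simp: A_def B_def)
    moreover have "sum g B = sum g A"
      by (rule sum.reindex_bij_witness[of _ "\<lambda>I. K - I" "\<lambda>I. K - I"])
         (auto simp: A_def B_def g_def double_diff mult.commute e)
    ultimately have "sum g (Pow K) = (1 + 1) * sum g A"
      by (simp add: sum.union_disjoint distrib_right)
    then show ?thesis using True char2 by (simp add: ext_mult_def g_def)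
  qed
qed

definition ext_homogeneous :: "nat \<Rightarrow> nat \<Rightarrow> 'r::comm_ring_1 ext \<Rightarrow> bool" where
  "ext_homogeneous r p x \<longleftrightarrow> (\<forall>K. x K \<noteq> 0 \<longrightarrow> K \<subseteq> {0..<r} \<and> card K = p)"

lemma ext_homogeneous_one: "ext_homogeneous r 0 ext_one"
  by (auto simp: ext_homogeneous_def ext_one_def)

lemma ext_homogeneous_mult:
  assumes "ext_homogeneous r p x" "ext_homogeneous r q y"
  shows "ext_homogeneous r (p + q) (ext_mult r x y)"
  unfolding ext_homogeneous_def
proof (intro allI impI)
  fix K
  assume nz: "ext_mult r x y K \<noteq> 0"
  then have K: "K \<subseteq> {0..<r}" by (auto simp: ext_mult_def split: if_splits)
  then have fin: "finite K" using finite_subset by blast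
  from nz K have "(\<Sum>I\<in>Pow K. x I * y (K - I)) \<noteq> 0" by (simp add: ext_mult_def)
  then obtain I where "I \<subseteq> K" "x I * y (K - I) \<noteq> 0"
    by (meson PowD sum.not_neutral_contains_not_neutral)
  then have I: "I \<subseteq> K" "x I \<noteq> 0" "y (K - I) \<noteq> 0" by auto
  then have "card I = p" "card (K - I) = q"
    using assms unfolding ext_homogeneous_def by blast+
  moreover have "card (K - I) = card K - card I" "card I \<le> card K"
    using I fin by (simp_all add: card_Diff_subset card_mono finite_subset)
  ultimately have "card K = p + q" by simp
  with K show "K \<subseteq> {0..<r} \<and> card K = p + q" by simp
qed

lemma ext_homogeneous_imp_supported: "ext_homogeneous r p x \<Longrightarrow> ext_supported r x"
  by (simp add: ext_homogeneous_def ext_supported_def)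

section \<open>Wedge products of moment vectors\<close>

lemma exists_polyfun_nonzero:
  fixes c :: "nat \<Rightarrow> 'a::idom"
  assumes "c n \<noteq> 0" "finite A" "n < card A"
  shows "\<exists>z\<in>A. (\<Sum>i\<le>n. c i * z ^ i) \<noteq> 0"
proof (rule ccontr)
  define p where "p = (\<Sum>i\<le>n. monom (c i) i)"
  have poly_p: "poly p z = (\<Sum>i\<le>n. c i * z ^ i)" for z
    by (simp add: p_def poly_sum poly_monom)
  have "coeff p n = c n"
    by (simp add: p_def coeff_sum coeff_monom)
  then have "p \<noteq> 0" using assms(1) by auto
  have "degree p \<le> n"
    unfolding p_def by (rule degree_sum_le) (auto intro: order.trans[OF degree_monom_le])
  assume "\<not> (\<exists>z\<in>A. (\<Sum>i\<le>n. c i * z ^ i) \<noteq> 0)"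
  then have "A \<subseteq> {z. poly p z = 0}" by (simp add: poly_p subset_iff)
  then have "card A \<le> card {z. poly p z = 0}"
    using \<open>p \<noteq> 0\<close> by (intro card_mono poly_roots_finite)
  also have "\<dots> \<le> degree p"
    using \<open>p \<noteq> 0\<close> by (rule card_poly_roots_bound)
  finally show False using \<open>degree p \<le> n\<close> assms(3) by linarith
qed

text \<open>The vector \<open>(1, x, \<dots>, x^(r-1))\<close>; evaluated at \<open>{0..<n}\<close>, the wedge product of
  \<open>n\<close> such vectors is the \<open>n \<times> n\<close> Vandermonde determinant of their parameters.\<close>

definition moment_vec :: "nat \<Rightarrow> 'a::comm_ring_1 \<Rightarrow> 'a ext" where
  "moment_vec r x = (\<lambda>K. if \<exists>i<r. K = {i} then x ^ (THE i. K = {i}) else 0)"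

definition wedge_moments :: "nat \<Rightarrow> 'a::comm_ring_1 list \<Rightarrow> 'a ext" where
  "wedge_moments r xs = foldr (\<lambda>x. ext_mult r (moment_vec r x)) xs ext_one"

lemma wedge_moments_Nil [simp]: "wedge_moments r [] = ext_one"
  by (simp add: wedge_moments_def)

lemma wedge_moments_Cons [simp]:
  "wedge_moments r (x # xs) = ext_mult r (moment_vec r x) (wedge_moments r xs)"
  by (simp add: wedge_moments_def)

lemma ext_homogeneous_wedge_moments: "ext_homogeneous r (length xs) (wedge_moments r xs)"
proof (induction xs)
  case Nil
  then show ?case by (simp add: ext_homogeneous_one)
next
  case (Cons x xs)
  have "ext_homogeneous r 1 (moment_vec r x)"
    by (auto simp: ext_homogeneous_def moment_vec_def)
  from ext_homogeneous_mult[OF this Cons.IH] show ?case by simp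
qed

lemma wedge_moments_append:
  "wedge_moments r (xs @ ys) = ext_mult r (wedge_moments r xs) (wedge_moments r ys)"
  by (induction xs)
     (simp_all add: ext_mult_one_left ext_homogeneous_imp_supported[OF ext_homogeneous_wedge_moments]
       ext_mult_assoc)

lemma wedge_moments_eq_zero_if_not_distinct:
  assumes char2: "(1::'a::comm_ring_1) + 1 = 0" and "\<not> distinct (xs :: 'a list)"
  shows "wedge_moments r xs = (\<lambda>_. 0)"
proof -
  obtain as x bs cs where xs: "xs = as @ [x] @ bs @ [x] @ cs"
    using not_distinct_decomp[OF assms(2)] by blast
  let ?X = "moment_vec r x"
  have "ext_mult r ?X (ext_mult r (wedge_moments r bs) (ext_mult r ?X (wedge_moments r cs)))
      = ext_mult r (ext_mult r ?X ?X) (ext_mult r (wedge_moments r bs) (wedge_moments r cs))"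
    by (simp add: ext_mult_assoc ext_mult_commute[of r "wedge_moments r bs"])
  also have "\<dots> = (\<lambda>_. 0)"
    using ext_mult_self_eq_zero[OF char2, of ?X] by (simp add: moment_vec_def ext_mult_zero_left)
  finally show ?thesis
    using xs by (simp add: wedge_moments_append ext_mult_commute[of r "wedge_moments r as"] ext_mult_zero_left)
qed

lemma wedge_moments_Cons_apply:
  assumes "K \<subseteq> {0..<r}"
  shows "wedge_moments r (x # xs) K = (\<Sum>i\<in>K. x ^ i * wedge_moments r xs (K - {i}))"
proof -
  have fin: "finite K" using assms finite_subset by blast
  have "wedge_moments r (x # xs) K = (\<Sum>I\<in>Pow K. moment_vec r x I * wedge_moments r xs (K - I))"
    using assms by (simp add: ext_mult_def)
  also have "\<dots> = (\<Sum>I\<in>(\<lambda>i. {i}) ` K. moment_vec r x I * wedge_moments r xs (K - I))"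
    by (rule sum.mono_neutral_right) (auto simp: fin moment_vec_def)
  also have "\<dots> = (\<Sum>i\<in>K. x ^ i * wedge_moments r xs (K - {i}))"
    using assms by (subst sum.reindex) (auto simp: inj_on_def moment_vec_def intro!: sum.cong)
  finally show ?thesis .
qed

text \<open>As a polynomial in \<open>x\<close>, the Vandermonde determinant of \<open>x # xs\<close> has degree
  \<open>length xs\<close> with nonzero leading coefficient (induction), and it vanishes at every element
  of \<open>xs\<close>; having no further roots, it does not vanish at \<open>x \<notin> set xs\<close>.\<close>

lemma wedge_moments_top_nonzero:
  fixes xs :: "'a::field list"
  assumes char2: "(1::'a) + 1 = 0"
  shows "distinct xs \<Longrightarrow> length xs \<le> r \<Longrightarrow> wedge_moments r xs {0..<length xs} \<noteq> 0"
proof (induction xs)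
  case Nil
  then show ?case by (simp add: ext_one_def)
next
  case (Cons x xs)
  let ?n = "length xs"
  define c where "c i = wedge_moments r xs ({0..<Suc ?n} - {i})" for i
  have expand: "wedge_moments r (z # xs) {0..<Suc ?n} = (\<Sum>i\<le>?n. c i * z ^ i)" for z
  proof -
    have "wedge_moments r (z # xs) {0..<Suc ?n}
        = (\<Sum>i\<in>{0..<Suc ?n}. z ^ i * wedge_moments r xs ({0..<Suc ?n} - {i}))"
      using Cons.prems by (intro wedge_moments_Cons_apply) auto
    then show ?thesis
      by (simp add: c_def atLeast0LessThan lessThan_Suc_atMost mult.commute)
  qed
  have "{0..<Suc ?n} - {?n} = {0..<?n}" by auto
  then have "c ?n \<noteq> 0" using Cons by (simp add: c_def)
  then obtain z where z: "z \<in> set (x # xs)" "wedge_moments r (z # xs) {0..<Suc ?n} \<noteq> 0"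
    using exists_polyfun_nonzero[of c ?n "set (x # xs)"] Cons.prems
    by (auto simp: expand distinct_card simp del: wedge_moments_Cons)
  have "z = x"
  proof (rule ccontr)
    assume "z \<noteq> x"
    then have "\<not> distinct (z # xs)" using z(1) by auto
    then show False using z(2) wedge_moments_eq_zero_if_not_distinct[OF char2] by metis
  qed
  with z show ?case by simp
qed

lemma wedge_moments_top_nonzero_iff:
  fixes xs :: "'a::field list"
  assumes "(1::'a) + 1 = 0" and "length xs \<le> r"
  shows "wedge_moments r xs {0..<length xs} \<noteq> 0 \<longleftrightarrow> distinct xs"
  using assms wedge_moments_top_nonzero wedge_moments_eq_zero_if_not_distinct by metis

definition ext_const :: "'a::comm_ring_1 ext \<Rightarrow> ('v, 'a) mpoly ext" where
  "ext_const x = (\<lambda>K. mp_const (x K))"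

lemma single_sum: "Poly_Mapping.single m (sum g A) = (\<Sum>x\<in>A. Poly_Mapping.single m (g x))"
  by (induction A rule: infinite_finite_induct) (simp_all add: single_add)

lemma ext_const_mult: "ext_mult r (ext_const x) (ext_const y) = ext_const (ext_mult r x y)"
  by (simp add: fun_eq_iff ext_mult_def ext_const_def mp_const_def mult_single single_sum)

lemma ext_const_one: "ext_const ext_one = ext_one"
  by (simp add: fun_eq_iff ext_one_def ext_const_def mp_const_def)

definition tuple_wedge :: "nat \<Rightarrow> nat \<Rightarrow> ('u \<Rightarrow> 'a::comm_ring_1) \<Rightarrow> 'u list \<Rightarrow> 'a ext" where
  "tuple_wedge d r f t = wedge_moments r (map (\<lambda>i. f (t ! i)) [1..<d])"

lemma M_elem_eq_ext_const: "M_elem d r f t = ext_const (tuple_wedge d r f t)"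
proof -
  have "foldr (\<lambda>i. ext_mult r (chi r f (t ! i))) is ext_one
      = ext_const (wedge_moments r (map (\<lambda>i. f (t ! i)) is))" for "is"
  proof (induction "is")
    case Nil
    then show ?case by (simp add: ext_const_one)
  next
    case (Cons i "is")
    have chi_eq: "chi r f (t ! i) = ext_const (moment_vec r (f (t ! i)))"
      by (auto simp: fun_eq_iff chi_def moment_vec_def ext_const_def mp_const_def)
    show ?case by (simp add: Cons.IH chi_eq ext_const_mult)
  qed
  then show ?thesis by (simp add: M_elem_def tuple_wedge_def)
qed

definition tuples_wedge :: "nat \<Rightarrow> nat \<Rightarrow> ('u \<Rightarrow> 'a::comm_ring_1) \<Rightarrow> 'u list set \<Rightarrow> 'a ext" where
  "tuples_wedge d r f S = Finite_Set.fold (\<lambda>t. ext_mult r (tuple_wedge d r f t)) ext_one S"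

lemma tuples_wedge_empty [simp]: "tuples_wedge d r f {} = ext_one"
  by (simp add: tuples_wedge_def)

lemma tuples_wedge_insert:
  "finite S \<Longrightarrow> t \<notin> S \<Longrightarrow> tuples_wedge d r f (insert t S) = ext_mult r (tuple_wedge d r f t) (tuples_wedge d r f S)"
  unfolding tuples_wedge_def by (rule fold_ext_mult_insert)

lemma ext_homogeneous_tuples_wedge:
  "finite S \<Longrightarrow> ext_homogeneous r ((d - 1) * card S) (tuples_wedge d r f S)"
proof (induction S rule: finite_induct)
  case empty
  then show ?case by (simp add: ext_homogeneous_one)
next
  case (insert t S)
  have "ext_homogeneous r (d - 1) (tuple_wedge d r f t)"
    using ext_homogeneous_wedge_moments[of r "map (\<lambda>i. f (t ! i)) [1..<d]"]
    by (simp add: tuple_wedge_def)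
  with insert show ?case
    by (simp add: tuples_wedge_insert ext_homogeneous_mult add_mult_distrib2)
qed

lemma tuples_wedge_set:
  "distinct ts \<Longrightarrow> tuples_wedge d r f (set ts) = wedge_moments r (concat (map (\<lambda>t. map (\<lambda>i. f (t ! i)) [1..<d]) ts))"
  by (induction ts) (simp_all add: tuples_wedge_insert wedge_moments_append tuple_wedge_def)

lemma tuples_wedge_top_nonzero_iff:
  fixes f :: "'u \<Rightarrow> 'a::field"
  assumes "(1::'a) + 1 = 0" and "finite S" and "(d - 1) * card S \<le> r"
  shows "tuples_wedge d r f S {0..<(d - 1) * card S} \<noteq> 0 \<longleftrightarrow> inj_on (\<lambda>(t, i). f (t ! i)) (S \<times> {1..<d})"
proof -
  obtain ts where ts: "set ts = S" "distinct ts"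
    using finite_distinct_list[OF \<open>finite S\<close>] by blast
  define xs where "xs = concat (map (\<lambda>t. map (\<lambda>i. f (t ! i)) [1..<d]) ts)"
  have len: "length xs = (d - 1) * card S"
    using distinct_card[OF ts(2)] ts(1)
    by (simp add: xs_def length_concat comp_def sum_list_triv mult.commute)
  have "set xs = (\<lambda>(t, i). f (t ! i)) ` (S \<times> {1..<d})"
    using ts by (auto simp: xs_def)
  moreover have "card (S \<times> {1..<d}) = length xs"
    using len by (simp add: card_cartesian_product mult.commute)
  ultimately have "distinct xs \<longleftrightarrow> inj_on (\<lambda>(t, i). f (t ! i)) (S \<times> {1..<d})"
    using \<open>finite S\<close> by (metis card_distinct distinct_card finite_SigmaI finite_atLeastLessThan inj_on_iff_eq_card)
  moreover have "tuples_wedge d r f S = wedge_moments r xs"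
    using tuples_wedge_set[OF ts(2)] ts(1) by (simp add: xs_def)
  ultimately show ?thesis
    using wedge_moments_top_nonzero_iff[OF assms(1), of xs r] len assms(3) by simp
qed

section \<open>Expansion of \<open>P\<close> over matchings\<close>

text \<open>Sets of tuples of \<open>T\<close> whose first coordinates are distinct elements of \<open>B\<close>: expanding
  \<open>\<Prod>a\<in>B. (1 + z Q_a)\<close> picks at most one tuple per \<open>a\<close>.\<close>

definition first_coord_matchings :: "'u list set \<Rightarrow> 'u set \<Rightarrow> 'u list set set" where
  "first_coord_matchings T B = {S. S \<subseteq> {t\<in>T. t ! 0 \<in> B} \<and> inj_on (\<lambda>t. t ! 0) S}"

definition matching_monomial :: "'u list set \<Rightarrow> ('u list option \<Rightarrow>\<^sub>0 nat)" where
  "matching_monomial S = Poly_Mapping.single None (card S) + (\<Sum>t\<in>S. Poly_Mapping.single (Some t) 1)"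

lemma finite_first_coord_matchings: "finite T \<Longrightarrow> finite (first_coord_matchings T B)"
  by (rule finite_subset[of _ "Pow T"]) (auto simp: first_coord_matchings_def)

lemma first_coord_matchings_subset: "S \<in> first_coord_matchings T B \<Longrightarrow> S \<subseteq> T"
  by (auto simp: first_coord_matchings_def)

lemma finite_mem_first_coord_matchings: "finite T \<Longrightarrow> S \<in> first_coord_matchings T B \<Longrightarrow> finite S"
  by (auto simp: first_coord_matchings_def intro: finite_subset)

lemma first_coord_matchings_empty: "first_coord_matchings T {} = {{}}"
  by (auto simp: first_coord_matchings_def)

lemma first_coord_matchings_insert:
  assumes "a \<notin> B"
  shows "first_coord_matchings T (insert a B)
    = first_coord_matchings T B \<union> (\<lambda>(t, S). insert t S) ` ({t\<in>T. t ! 0 = a} \<times> first_coord_matchings T B)"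
    (is "?M (insert a B) = ?M B \<union> ?New")
proof
  show "?M B \<union> ?New \<subseteq> ?M (insert a B)"
    using assms by (fastforce simp: first_coord_matchings_def)
next
  show "?M (insert a B) \<subseteq> ?M B \<union> ?New"
  proof
    fix S
    assume S: "S \<in> ?M (insert a B)"
    show "S \<in> ?M B \<union> ?New"
    proof (cases "\<exists>t\<in>S. t ! 0 = a")
      case False
      with S show ?thesis by (auto simp: first_coord_matchings_def)
    next
      case True
      then obtain t where t: "t \<in> S" "t ! 0 = a" by blast
      with S have "S - {t} \<in> ?M B" "t \<in> {t\<in>T. t ! 0 = a}"
        by (auto simp: first_coord_matchings_def inj_on_def)
      moreover have "S = insert t (S - {t})" using t by blast
      ultimately show ?thesis by blast
    qed
  qed
qed

lemma first_coord_matchings_insert_disjoint: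
  "a \<notin> B \<Longrightarrow> first_coord_matchings T B
    \<inter> (\<lambda>(t, S). insert t S) ` ({t\<in>T. t ! 0 = a} \<times> first_coord_matchings T B) = {}"
  by (auto simp: first_coord_matchings_def)

lemma inj_on_insert_first_coord_matchings:
  assumes "a \<notin> B"
  shows "inj_on (\<lambda>(t, S). insert t S) ({t\<in>T. t ! 0 = a} \<times> first_coord_matchings T B)"
proof (rule inj_onI)
  fix p q
  assume "p \<in> {t\<in>T. t ! 0 = a} \<times> first_coord_matchings T B"
    and "q \<in> {t\<in>T. t ! 0 = a} \<times> first_coord_matchings T B"
    and eq: "(\<lambda>(t, S). insert t S) p = (\<lambda>(t, S). insert t S) q"
  then obtain t S t' S' where pq: "p = (t, S)" "q = (t', S')"
    and "t ! 0 = a" "S \<in> first_coord_matchings T B" "t' ! 0 = a" "S' \<in> first_coord_matchings T B"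
    by auto
  with assms have "t \<notin> S" "t \<notin> S'"
    by (auto simp: first_coord_matchings_def)
  moreover from eq pq \<open>t \<notin> S'\<close> have "t = t'" by auto
  ultimately show "p = q"
    using eq pq by (simp add: insert_ident)
qed

lemma sum_first_coord_matchings_insert:
  assumes "finite T" "a \<notin> B"
  shows "(\<Sum>S\<in>first_coord_matchings T (insert a B). g S)
    = (\<Sum>S\<in>first_coord_matchings T B. g S) + (\<Sum>t\<in>{t\<in>T. t ! 0 = a}. \<Sum>S\<in>first_coord_matchings T B. g (insert t S))"
proof -
  let ?New = "(\<lambda>(t, S). insert t S) ` ({t\<in>T. t ! 0 = a} \<times> first_coord_matchings T B)"
  have "(\<Sum>t\<in>{t\<in>T. t ! 0 = a}. \<Sum>S\<in>first_coord_matchings T B. g (insert t S)) = (\<Sum>S\<in>?New. g S)"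
    by (subst sum.reindex[OF inj_on_insert_first_coord_matchings[OF assms(2)]])
       (simp add: sum.cartesian_product comp_def case_prod_beta)
  with assms show ?thesis
    by (simp add: first_coord_matchings_insert sum.union_disjoint finite_first_coord_matchings
        first_coord_matchings_insert_disjoint)
qed

lemma matching_monomial_insert:
  assumes "finite S" "t \<notin> S"
  shows "matching_monomial (insert t S)
    = Poly_Mapping.single None 1 + Poly_Mapping.single (Some t) 1 + matching_monomial S"
proof -
  have card_insert: "Poly_Mapping.single None (Suc (card S))
      = Poly_Mapping.single None 1 + Poly_Mapping.single None (card S)"
    by (simp add: single_add[symmetric])
  show ?thesis
    using assms by (simp add: matching_monomial_def card_insert ac_simps)
qed

lemma lookup_matching_monomial_None:
  "finite S \<Longrightarrow> Poly_Mapping.lookup (matching_monomial S) None = card S"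
  by (simp add: matching_monomial_def lookup_add lookup_sum lookup_single)

lemma lookup_matching_monomial_Some:
  "finite S \<Longrightarrow> Poly_Mapping.lookup (matching_monomial S) (Some t) = (if t \<in> S then 1 else 0)"
  by (simp add: matching_monomial_def lookup_add lookup_sum lookup_single when_def sum.delta')

lemma matching_monomial_inject:
  assumes "finite S" "finite S'"
  shows "matching_monomial S = matching_monomial S' \<longleftrightarrow> S = S'"
proof
  assume eq: "matching_monomial S = matching_monomial S'"
  have "t \<in> S \<longleftrightarrow> t \<in> S'" for t
    using arg_cong[OF eq, of "\<lambda>m. Poly_Mapping.lookup m (Some t)"] assms
    by (simp add: lookup_matching_monomial_Some split: if_splits)
  then show "S = S'" by blast
qed simp

lemma P_elem_insert:
  "finite B \<Longrightarrow> a \<notin> B \<Longrightarrow> P_elem d r f T (insert a B)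
    = ext_mult r (ext_add ext_one (\<lambda>K. mp_var None * Q_elem d r f T a K)) (P_elem d r f T B)"
  unfolding P_elem_def by (rule fold_ext_mult_insert)

lemma ext_supported_P_elem: "ext_supported r (P_elem d r f T B)"
proof (cases "finite B \<and> B \<noteq> {}")
  case True
  then obtain a where "a \<in> B" by blast
  have "ext_supported r (P_elem d r f T (insert a (B - {a})))"
    by (subst P_elem_insert) (use True in \<open>auto simp: ext_supported_mult\<close>)
  with \<open>a \<in> B\<close> show ?thesis
    by (simp add: insert_absorb)
next
  case False
  then show ?thesis by (auto simp: P_elem_def ext_supported_one)
qed

lemma z_mult_Q_elem:
  "mp_var None * Q_elem d r f T a I = (\<Sum>t\<in>{t\<in>T. t ! 0 = a}.
     Poly_Mapping.single (Poly_Mapping.single None 1 + Poly_Mapping.single (Some t) 1) (tuple_wedge d r f t I))"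
  by (simp add: Q_elem_def M_elem_eq_ext_const ext_const_def mp_var_def mp_const_def
      sum_distrib_left mult_single ac_simps)

lemma ext_mult_z_Q_elem_sum:
  assumes "K \<subseteq> {0..<r}"
    and fresh: "\<And>t S. t \<in> {t\<in>T. t ! 0 = a} \<Longrightarrow> S \<in> \<M> \<Longrightarrow> finite S \<and> t \<notin> S"
  shows "ext_mult r (\<lambda>K. mp_var None * Q_elem d r f T a K)
      (\<lambda>K. \<Sum>S\<in>\<M>. Poly_Mapping.single (matching_monomial S) (tuples_wedge d r f S K)) K
    = (\<Sum>t\<in>{t\<in>T. t ! 0 = a}. \<Sum>S\<in>\<M>.
        Poly_Mapping.single (matching_monomial (insert t S)) (tuples_wedge d r f (insert t S) K))"
proof -
  let ?Ta = "{t\<in>T. t ! 0 = a}"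
  let ?m = "\<lambda>t. Poly_Mapping.single None 1 + Poly_Mapping.single (Some t) (1::nat)"
  have "ext_mult r (\<lambda>K. mp_var None * Q_elem d r f T a K)
      (\<lambda>K. \<Sum>S\<in>\<M>. Poly_Mapping.single (matching_monomial S) (tuples_wedge d r f S K)) K
    = (\<Sum>I\<in>Pow K. \<Sum>t\<in>?Ta. \<Sum>S\<in>\<M>. Poly_Mapping.single (?m t + matching_monomial S)
        (tuple_wedge d r f t I * tuples_wedge d r f S (K - I)))"
    using assms(1) by (simp add: ext_mult_def z_mult_Q_elem sum_product mult_single)
  also have "\<dots> = (\<Sum>t\<in>?Ta. \<Sum>S\<in>\<M>. \<Sum>I\<in>Pow K. Poly_Mapping.single (?m t + matching_monomial S)
        (tuple_wedge d r f t I * tuples_wedge d r f S (K - I)))"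
    by (rule trans[OF sum.swap], rule sum.cong[OF refl], rule sum.swap)
  also have "\<dots> = (\<Sum>t\<in>?Ta. \<Sum>S\<in>\<M>.
        Poly_Mapping.single (matching_monomial (insert t S)) (tuples_wedge d r f (insert t S) K))"
  proof (intro sum.cong refl)
    fix t S
    assume "t \<in> ?Ta" "S \<in> \<M>"
    with fresh have "finite S" "t \<notin> S" by blast+
    then show "(\<Sum>I\<in>Pow K. Poly_Mapping.single (?m t + matching_monomial S)
        (tuple_wedge d r f t I * tuples_wedge d r f S (K - I)))
      = Poly_Mapping.single (matching_monomial (insert t S)) (tuples_wedge d r f (insert t S) K)"
      using assms(1)
      by (simp add: single_sum[symmetric] matching_monomial_insert tuples_wedge_insert ext_mult_def)
  qed
  finally show ?thesis .
qed

lemma P_elem_expansion: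
  assumes "finite T" "finite B"
  shows "P_elem d r f T B K = (\<Sum>S\<in>first_coord_matchings T B.
    Poly_Mapping.single (matching_monomial S) (tuples_wedge d r f S K))"
  using assms(2)
proof (induction B arbitrary: K rule: finite_induct)
  case empty
  then show ?case
    by (simp add: P_elem_def first_coord_matchings_empty matching_monomial_def ext_one_def)
next
  case (insert a B)
  let ?M = "first_coord_matchings T"
  let ?Ta = "{t\<in>T. t ! 0 = a}"
  let ?F = "\<lambda>S. Poly_Mapping.single (matching_monomial S) (tuples_wedge d r f S K)"
  show ?case
  proof (cases "K \<subseteq> {0..<r}")
    case False
    have "tuples_wedge d r f S K = 0" if "S \<in> ?M (insert a B)" for S
      using ext_homogeneous_tuples_wedge[OF finite_mem_first_coord_matchings[OF assms(1) that], of r d f]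
        False
      unfolding ext_homogeneous_def by blast
    moreover have "P_elem d r f T (insert a B) K = 0"
      using ext_supported_P_elem[of r d f T "insert a B"] False unfolding ext_supported_def by blast
    ultimately show ?thesis by simp
  next
    case True
    have PB: "P_elem d r f T B = (\<lambda>K. \<Sum>S\<in>?M B.
        Poly_Mapping.single (matching_monomial S) (tuples_wedge d r f S K))"
      using insert.IH by (simp add: fun_eq_iff)
    have fresh: "finite S \<and> t \<notin> S" if "t \<in> ?Ta" "S \<in> ?M B" for t S
      using that insert.hyps(2) finite_mem_first_coord_matchings[OF assms(1)]
      by (auto simp: first_coord_matchings_def)
    have P_insert: "P_elem d r f T (insert a B) = ext_add (P_elem d r f T B)
        (ext_mult r (\<lambda>K. mp_var None * Q_elem d r f T a K) (P_elem d r f T B))"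
      by (simp only: P_elem_insert[OF insert.hyps] ext_mult_add_left
          ext_mult_one_left[OF ext_supported_P_elem])
    have z_Q: "ext_mult r (\<lambda>K. mp_var None * Q_elem d r f T a K) (P_elem d r f T B) K
        = (\<Sum>t\<in>?Ta. \<Sum>S\<in>?M B. ?F (insert t S))"
      unfolding PB using fresh by (rule ext_mult_z_Q_elem_sum[OF True])
    have "P_elem d r f T (insert a B) K
        = P_elem d r f T B K + (\<Sum>t\<in>?Ta. \<Sum>S\<in>?M B. ?F (insert t S))"
      by (simp add: P_insert z_Q ext_add_def)
    also have "\<dots> = (\<Sum>S\<in>?M (insert a B). ?F S)"
      using sum_first_coord_matchings_insert[OF assms(1) insert.hyps(2), of ?F] insert.IH by simp
    finally show ?thesis .
  qed
qed

lemma keys_P_elem: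
  assumes "finite T" "finite B" "m \<in> Poly_Mapping.keys (P_elem d r f T B K)"
  obtains S where "S \<in> first_coord_matchings T B" "m = matching_monomial S" "tuples_wedge d r f S K \<noteq> 0"
  using assms(3) keys_sum[of "\<lambda>S. Poly_Mapping.single (matching_monomial S) (tuples_wedge d r f S K)"]
  unfolding P_elem_expansion[OF assms(1,2)] by (fastforce split: if_splits)

lemma lookup_P_elem_matching_monomial:
  assumes "finite T" "finite B" "S \<in> first_coord_matchings T B"
  shows "Poly_Mapping.lookup (P_elem d r f T B K) (matching_monomial S) = tuples_wedge d r f S K"
proof -
  have "Poly_Mapping.lookup (P_elem d r f T B K) (matching_monomial S)
      = (\<Sum>S'\<in>first_coord_matchings T B. if S' = S then tuples_wedge d r f S' K else 0)"
    using assms finite_mem_first_coord_matchings[OF assms(1)]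
    by (auto simp: P_elem_expansion lookup_sum lookup_single when_def matching_monomial_inject
        intro!: sum.cong)
  also have "\<dots> = tuples_wedge d r f S K"
    using assms by (simp add: sum.delta' finite_first_coord_matchings)
  finally show ?thesis .
qed

lemma z_degree_le_P_elem:
  assumes "d \<ge> 2" "finite T" "finite B"
  shows "z_degree_le (P_elem d ((d - 1) * k) f T B) k"
  unfolding z_degree_le_def
proof (intro allI ballI)
  fix K m
  assume "m \<in> Poly_Mapping.keys (P_elem d ((d - 1) * k) f T B K)"
  then obtain S where S: "S \<in> first_coord_matchings T B" "m = matching_monomial S"
    and nz: "tuples_wedge d ((d - 1) * k) f S K \<noteq> 0"
    using keys_P_elem[OF assms(2,3)] by blast
  have "finite S" using finite_mem_first_coord_matchings[OF assms(2) S(1)] .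
  then have "K \<subseteq> {0..<(d - 1) * k}" "card K = (d - 1) * card S"
    using ext_homogeneous_tuples_wedge[of S "(d - 1) * k" d f] nz by (auto simp: ext_homogeneous_def)
  then have "(d - 1) * card S \<le> (d - 1) * k"
    by (metis card_atLeastLessThan card_mono diff_zero finite_atLeastLessThan)
  with assms(1) \<open>finite S\<close> S(2) show "Poly_Mapping.lookup m None \<le> k"
    by (simp add: lookup_matching_monomial_None)
qed

lemma zcoeff_nonzero_P_elem_iff:
  assumes "finite T" "finite B"
  shows "zcoeff_nonzero (P_elem d r f T B K) k
    \<longleftrightarrow> (\<exists>S\<in>first_coord_matchings T B. card S = k \<and> tuples_wedge d r f S K \<noteq> 0)"
proof
  assume "zcoeff_nonzero (P_elem d r f T B K) k"
  then obtain m where m: "Poly_Mapping.lookup m None = 0"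
    "m + Poly_Mapping.single None k \<in> Poly_Mapping.keys (P_elem d r f T B K)"
    by (auto simp: zcoeff_nonzero_def in_keys_iff)
  then obtain S where S: "S \<in> first_coord_matchings T B"
    "m + Poly_Mapping.single None k = matching_monomial S" "tuples_wedge d r f S K \<noteq> 0"
    using keys_P_elem[OF assms] by blast
  have "card S = k"
    using arg_cong[OF S(2), of "\<lambda>m. Poly_Mapping.lookup m None"] m(1)
      lookup_matching_monomial_None[OF finite_mem_first_coord_matchings[OF assms(1) S(1)]]
    by (simp add: lookup_add)
  with S show "\<exists>S\<in>first_coord_matchings T B. card S = k \<and> tuples_wedge d r f S K \<noteq> 0" by blast
next
  assume "\<exists>S\<in>first_coord_matchings T B. card S = k \<and> tuples_wedge d r f S K \<noteq> 0"
  then obtain S where S: "S \<in> first_coord_matchings T B" "card S = k" "tuples_wedge d r f S K \<noteq> 0"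
    by blast
  define m where "m = (\<Sum>t\<in>S. Poly_Mapping.single (Some t) (1::nat))"
  have "Poly_Mapping.lookup m None = 0"
    by (simp add: m_def lookup_sum lookup_single)
  moreover have "m + Poly_Mapping.single None k = matching_monomial S"
    using S(2) by (simp add: m_def matching_monomial_def add.commute)
  ultimately show "zcoeff_nonzero (P_elem d r f T B K) k"
    unfolding zcoeff_nonzero_def
    using S(3) lookup_P_elem_matching_monomial[OF assms S(1), of d r f K] by metis
qed

definition tuples_disjoint_on :: "nat set \<Rightarrow> 'u list set \<Rightarrow> bool" where
  "tuples_disjoint_on I S \<longleftrightarrow> (\<forall>a\<in>S. \<forall>b\<in>S. a \<noteq> b \<longrightarrow> (\<forall>i\<in>I. a ! i \<noteq> b ! i))"

lemma tuples_disjoint_on_Un: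
  "tuples_disjoint_on (I \<union> J) S \<longleftrightarrow> tuples_disjoint_on I S \<and> tuples_disjoint_on J S"
  by (auto simp: tuples_disjoint_on_def)

lemma tuples_disjoint_on_singleton: "tuples_disjoint_on {i} S \<longleftrightarrow> inj_on (\<lambda>t. t ! i) S"
  by (auto simp: tuples_disjoint_on_def inj_on_def)

lemma inj_on_coords_iff_tuples_disjoint_on:
  assumes "\<forall>t\<in>S. \<forall>i\<in>I. t ! i \<in> U i" and "\<forall>i\<in>I. \<forall>j\<in>I. i \<noteq> j \<longrightarrow> U i \<inter> U j = {}"
  shows "inj_on (\<lambda>(t, i). t ! i) (S \<times> I) \<longleftrightarrow> tuples_disjoint_on I S"
  unfolding tuples_disjoint_on_def
proof
  assume inj: "inj_on (\<lambda>(t, i). t ! i) (S \<times> I)"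
  show "\<forall>a\<in>S. \<forall>b\<in>S. a \<noteq> b \<longrightarrow> (\<forall>i\<in>I. a ! i \<noteq> b ! i)"
  proof (intro ballI impI)
    fix a b i
    assume "a \<in> S" "b \<in> S" "a \<noteq> b" "i \<in> I"
    then show "a ! i \<noteq> b ! i" using inj_onD[OF inj, of "(a, i)" "(b, i)"] by auto
  qed
next
  assume disjoint: "\<forall>a\<in>S. \<forall>b\<in>S. a \<noteq> b \<longrightarrow> (\<forall>i\<in>I. a ! i \<noteq> b ! i)"
  show "inj_on (\<lambda>(t, i). t ! i) (S \<times> I)"
  proof (rule inj_onI, clarify)
    fix a i b j
    assume a: "a \<in> S" "i \<in> I" and b: "b \<in> S" "j \<in> I" and eq: "a ! i = b ! j"
    have "a ! i \<in> U i" "b ! j \<in> U j"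
      using assms(1) a b by auto
    with eq have "i = j"
      using assms(2) a(2) b(2) by auto
    with disjoint a b eq show "a = b \<and> i = j" by metis
  qed
qed

text \<open>Coordinate 0 is handled by the matching condition, the others by the Vandermonde
  determinant, whose parameters \<open>f (t ! i)\<close> are distinct iff the coordinates are.\<close>

lemma matching_tuples_wedge_nonzero_iff_disjoint:
  fixes f :: "'u \<Rightarrow> 'a::field"
  assumes "(1::'a) + 1 = 0" and "d > 0"
    and "\<forall>i<d. \<forall>j<d. i \<noteq> j \<longrightarrow> U i \<inter> U j = {}"
    and "T \<subseteq> {t. length t = d \<and> (\<forall>i<d. t ! i \<in> U i)}"
    and "inj_on f (\<Union>i\<in>{1..<d}. U i)"
    and "S \<subseteq> T" "finite S" "(d - 1) * card S \<le> r"
  shows "S \<in> first_coord_matchings T (U 0) \<and> tuples_wedge d r f S {0..<(d - 1) * card S} \<noteq> 0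
    \<longleftrightarrow> tuples_disjoint_on {..<d} S"
proof -
  have coords: "\<forall>t\<in>S. \<forall>i\<in>{..<d}. t ! i \<in> U i"
    using assms(4,6) by blast
  have "S \<in> first_coord_matchings T (U 0) \<longleftrightarrow> tuples_disjoint_on {0} S"
    using assms(2,6) coords by (auto simp: first_coord_matchings_def tuples_disjoint_on_singleton)
  moreover have "(\<lambda>(t, i). t ! i) ` (S \<times> {1..<d}) \<subseteq> (\<Union>i\<in>{1..<d}. U i)"
    using coords by auto
  then have "inj_on f ((\<lambda>(t, i). t ! i) ` (S \<times> {1..<d}))"
    using assms(5) by (rule inj_on_subset[rotated])
  then have "inj_on (f \<circ> (\<lambda>(t, i). t ! i)) (S \<times> {1..<d}) \<longleftrightarrow> inj_on (\<lambda>(t, i). t ! i) (S \<times> {1..<d})"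
    using comp_inj_on inj_on_imageI2 by blast
  moreover have "f \<circ> (\<lambda>(t, i). t ! i) = (\<lambda>(t, i). f (t ! i))"
    by auto
  moreover have "inj_on (\<lambda>(t, i). t ! i) (S \<times> {1..<d}) \<longleftrightarrow> tuples_disjoint_on {1..<d} S"
    by (rule inj_on_coords_iff_tuples_disjoint_on[of S "{1..<d}" U]) (use coords assms(3) in auto)
  moreover have "{..<d} = {0} \<union> {1..<d}"
    using assms(2) by auto
  ultimately show ?thesis
    using tuples_wedge_top_nonzero_iff[OF assms(1,7,8)] tuples_disjoint_on_Un[of "{0}" "{1..<d}" S]
    by simp
qed

lemma exists_matching_tuples_wedge_nonzero_iff_disjoint:
  fixes f :: "'u \<Rightarrow> 'a::field"
  assumes "(1::'a) + 1 = 0" and "d > 0"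
    and "\<forall>i<d. \<forall>j<d. i \<noteq> j \<longrightarrow> U i \<inter> U j = {}"
    and "T \<subseteq> {t. length t = d \<and> (\<forall>i<d. t ! i \<in> U i)}"
    and "inj_on f (\<Union>i\<in>{1..<d}. U i)"
    and "finite T"
  shows "(\<exists>S\<in>first_coord_matchings T (U 0).
      card S = k \<and> tuples_wedge d ((d - 1) * k) f S {0..<(d - 1) * k} \<noteq> 0)
    \<longleftrightarrow> (\<exists>S\<subseteq>T. card S = k \<and> tuples_disjoint_on {..<d} S)"
proof -
  have key: "S \<in> first_coord_matchings T (U 0) \<and> tuples_wedge d ((d - 1) * k) f S {0..<(d - 1) * k} \<noteq> 0
      \<longleftrightarrow> tuples_disjoint_on {..<d} S"
    if "S \<subseteq> T" "card S = k" for S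
    using matching_tuples_wedge_nonzero_iff_disjoint[OF assms(1-5) that(1)
        finite_subset[OF that(1) assms(6)], where r = "(d - 1) * k"] that(2)
    by simp
  show ?thesis
  proof
    assume "\<exists>S\<in>first_coord_matchings T (U 0).
      card S = k \<and> tuples_wedge d ((d - 1) * k) f S {0..<(d - 1) * k} \<noteq> 0"
    then obtain S where S: "S \<in> first_coord_matchings T (U 0)" "card S = k"
      "tuples_wedge d ((d - 1) * k) f S {0..<(d - 1) * k} \<noteq> 0"
      by blast
    with key[OF first_coord_matchings_subset[OF S(1)] S(2)] first_coord_matchings_subset[OF S(1)]
    show "\<exists>S\<subseteq>T. card S = k \<and> tuples_disjoint_on {..<d} S"
      by auto
  next
    assume "\<exists>S\<subseteq>T. card S = k \<and> tuples_disjoint_on {..<d} S"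
    then obtain S where S: "S \<subseteq> T" "card S = k" "tuples_disjoint_on {..<d} S"
      by blast
    with key[OF S(1,2)]
    show "\<exists>S\<in>first_coord_matchings T (U 0).
      card S = k \<and> tuples_wedge d ((d - 1) * k) f S {0..<(d - 1) * k} \<noteq> 0"
      by auto
  qed
qed

lemma finite_tuples:
  assumes "\<forall>i<d. finite (U i)"
  shows "finite {t. length t = d \<and> (\<forall>i<d. t ! i \<in> U i)}"
proof (rule finite_subset)
  show "{t. length t = d \<and> (\<forall>i<d. t ! i \<in> U i)} \<subseteq> {t. set t \<subseteq> (\<Union>i<d. U i) \<and> length t = d}"
    by (fastforce simp: in_set_conv_nth)
  show "finite {t. set t \<subseteq> (\<Union>i<d. U i) \<and> length t = d}"
    using assms by (simp add: finite_lists_length_eq)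
qed

theorem mainTheorem18:
  fixes d k :: nat
    and U :: "nat \<Rightarrow> 'u set"
    and T :: "'u list set"
    and f :: "'u \<Rightarrow> 'a::field"
  assumes "d \<ge> 2" and "k \<ge> 1"
    and "\<forall>i<d. finite (U i)"
    and "\<forall>i<d. \<forall>j<d. i \<noteq> j \<longrightarrow> U i \<inter> U j = {}"
    and "T \<subseteq> {t. length t = d \<and> (\<forall>i<d. t ! i \<in> U i)}"
    and "(1::'a) + 1 = 0"
    and "inj_on f (\<Union>i\<in>{1..<d}. U i)"
  shows "z_degree_le (P_elem d ((d - 1) * k) f T (U 0)) k
    \<and> (zcoeff_nonzero (P_elem d ((d - 1) * k) f T (U 0) {0..<(d - 1) * k}) k
       \<longleftrightarrow> (\<exists>S\<subseteq>T. card S = k \<and>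
              (\<forall>a\<in>S. \<forall>b\<in>S. a \<noteq> b \<longrightarrow> (\<forall>i<d. a ! i \<noteq> b ! i))))"
proof -
  have fin_T: "finite T"
    using finite_subset[OF assms(5) finite_tuples[OF assms(3)]] .
  have fin_U0: "finite (U 0)"
    using assms(1,3) by simp
  have "zcoeff_nonzero (P_elem d ((d - 1) * k) f T (U 0) {0..<(d - 1) * k}) k
      \<longleftrightarrow> (\<exists>S\<in>first_coord_matchings T (U 0).
            card S = k \<and> tuples_wedge d ((d - 1) * k) f S {0..<(d - 1) * k} \<noteq> 0)"
    by (rule zcoeff_nonzero_P_elem_iff[OF fin_T fin_U0])
  also have "\<dots> \<longleftrightarrow> (\<exists>S\<subseteq>T. card S = k \<and> tuples_disjoint_on {..<d} S)"
    using assms(1) by (intro exists_matching_tuples_wedge_nonzero_iff_disjoint[OF assms(6) _ assms(4,5,7) fin_T])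
      simp
  finally show ?thesis
    using z_degree_le_P_elem[OF assms(1) fin_T fin_U0] by (simp add: tuples_disjoint_on_def Ball_def)
qed

end
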